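(* Let $(S,* )$ be a finite indecomposable cycle set of size $n$ whose permutation group $\mathcal G$ is abelian. Then $n=|\mathcal G|$.
   Context: A cycle set is a set $S$ with a binary operation $*$ such that each $t\mapsto s*t$ is bijective and $(s*t)*(s*u)=(t*s)*(t*u)$ for all $s,t,u$. Write $S=\{s_1,\dots,s_n\}$, let $\psi(s)\in\mathfrak S_n$ satisfy $s_i*s_j=s_{\psi(s_i)(j)}$, and $\mathcal G=\langle\psi(s_1),\dots,\psi(s_n)\rangle\le\mathfrak S_n$. $S$ is decomposable if there is a partition $S=X\sqcup Y$ with $X,Y$ nonempty and $\psi(s)(X)\subseteq X$, $\psi(s)(Y)\subseteq Y$ for all $s\in S$; otherwise it is indecomposable. *)

theory Defs
  imports Main
begin

definition cycle_set :: "'a set \<Rightarrow> ('a \<Rightarrow> 'a \<Rightarrow> 'a) \<Rightarrow> bool" where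
  "cycle_set S op \<longleftrightarrow>
     (\<forall>s\<in>S. bij_betw (op s) S S) \<and>
     (\<forall>s\<in>S. \<forall>t\<in>S. \<forall>u\<in>S. op (op s t) (op s u) = op (op t s) (op t u))"

definition psi :: "'a set \<Rightarrow> ('a \<Rightarrow> 'a \<Rightarrow> 'a) \<Rightarrow> 'a \<Rightarrow> ('a \<Rightarrow> 'a)" where
  "psi S op s = (\<lambda>x. if x \<in> S then op s x else x)"

definition psi_inv :: "'a set \<Rightarrow> ('a \<Rightarrow> 'a \<Rightarrow> 'a) \<Rightarrow> 'a \<Rightarrow> ('a \<Rightarrow> 'a)" where
  "psi_inv S op s = (\<lambda>x. if x \<in> S then inv_into S (op s) x else x)"

inductive_set perm_group :: "'a set \<Rightarrow> ('a \<Rightarrow> 'a \<Rightarrow> 'a) \<Rightarrow> ('a \<Rightarrow> 'a) set"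
  for S op where
  pg_id: "id \<in> perm_group S op"
| pg_gen: "s \<in> S \<Longrightarrow> g \<in> perm_group S op \<Longrightarrow> psi S op s \<circ> g \<in> perm_group S op"
| pg_inv: "s \<in> S \<Longrightarrow> g \<in> perm_group S op \<Longrightarrow> psi_inv S op s \<circ> g \<in> perm_group S op"

definition decomposable :: "'a set \<Rightarrow> ('a \<Rightarrow> 'a \<Rightarrow> 'a) \<Rightarrow> bool" where
  "decomposable S op \<longleftrightarrow>
     (\<exists>X Y. X \<noteq> {} \<and> Y \<noteq> {} \<and> X \<inter> Y = {} \<and> X \<union> Y = S \<and>
        (\<forall>s\<in>S. psi S op s ` X \<subseteq> X \<and> psi S op s ` Y \<subseteq> Y))"

definition indecomposable :: "'a set \<Rightarrow> ('a \<Rightarrow> 'a \<Rightarrow> 'a) \<Rightarrow> bool" where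
  "indecomposable S op \<longleftrightarrow> \<not> decomposable S op"

end

theory Submission
  imports Defs
begin

text \<open>
  Indecomposability makes \<open>\<G>\<close> transitive on \<open>S\<close>: the \<open>\<G>\<close>-orbit of a point and its complement
  are both invariant under every \<open>\<psi>(s)\<close>, so the complement is empty. A transitive abelian
  permutation group acts freely: if \<open>g x\<^sub>0 = h x\<^sub>0\<close>, then every point is \<open>k x\<^sub>0\<close> for some
  \<open>k \<in> \<G>\<close> and \<open>g (k x\<^sub>0) = k (g x\<^sub>0) = k (h x\<^sub>0) = h (k x\<^sub>0)\<close>. Hence \<open>g \<mapsto> g x\<^sub>0\<close> is a bijection
  from \<open>\<G>\<close> onto \<open>S\<close>.
\<close>

lemma inj_on_eval_if_commuting_transitive:
  assumes comm: "\<forall>g\<in>G. \<forall>h\<in>G. g \<circ> h = h \<circ> g"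
    and trans: "\<forall>y\<in>S. \<exists>k\<in>G. y = k x"
    and fix_outside: "\<forall>g\<in>G. \<forall>y. y \<notin> S \<longrightarrow> g y = y"
  shows "inj_on (\<lambda>g. g x) G"
proof (rule inj_onI)
  fix g h assume g: "g \<in> G" and h: "h \<in> G" and eq: "g x = h x"
  show "g = h"
  proof
    fix y
    show "g y = h y"
    proof (cases "y \<in> S")
      case True
      then obtain k where k: "k \<in> G" and y: "y = k x" using trans by blast
      have "g y = (g \<circ> k) x" using y by simp
      also have "\<dots> = (k \<circ> g) x" by (simp only: comm[rule_format, OF g k])
      also have "\<dots> = (k \<circ> h) x" using eq by simp
      also have "\<dots> = (h \<circ> k) x" by (simp only: comm[rule_format, OF k h])
      also have "\<dots> = h y" using y by simp
      finally show ?thesis .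
    next
      case False
      then have "g y = y" and "h y = y" using fix_outside g h by blast+
      then show ?thesis by simp
    qed
  qed
qed

lemma psi_maps_into:
  assumes "bij_betw (op s) S S" "x \<in> S"
  shows "psi S op s x \<in> S"
  using assms by (simp add: psi_def bij_betwE)

lemma psi_inv_maps_into:
  assumes "bij_betw (op s) S S" "x \<in> S"
  shows "psi_inv S op s x \<in> S"
  using assms by (simp add: psi_inv_def bij_betw_def inv_into_into)

lemma psi_inv_psi:
  assumes "bij_betw (op s) S S" "x \<in> S"
  shows "psi_inv S op s (psi S op s x) = x"
  using assms by (simp add: psi_def psi_inv_def bij_betw_def bij_betwE inv_into_f_f)

lemma perm_group_stable:
  assumes bij: "\<forall>s\<in>S. bij_betw (op s) S S" and g: "g \<in> perm_group S op"
  shows "(\<forall>x\<in>S. g x \<in> S) \<and> (\<forall>x. x \<notin> S \<longrightarrow> g x = x)"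
  using g
proof induction
  case pg_id
  then show ?case by simp
next
  case (pg_gen s g)
  then show ?case using bij psi_maps_into[of op s S] by (simp add: psi_def)
next
  case (pg_inv s g)
  then show ?case using bij psi_inv_maps_into[of op s S] by (simp add: psi_inv_def)
qed

lemma perm_group_orbit_eq_if_indecomposable:
  assumes bij: "\<forall>s\<in>S. bij_betw (op s) S S"
    and indec: "indecomposable S op" and x: "x \<in> S"
  shows "(\<lambda>g. g x) ` perm_group S op = S"
proof -
  let ?G = "perm_group S op"
  define Orb where "Orb = (\<lambda>g. g x) ` ?G"
  have Orb_sub: "Orb \<subseteq> S"
    unfolding Orb_def using perm_group_stable[OF bij] x by (intro image_subsetI) blast
  have x_in_Orb: "x \<in> Orb" unfolding Orb_def by (rule image_eqI[of _ _ id]) (simp_all add: pg_id)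
  have Orb_inv: "psi S op s ` Orb \<subseteq> Orb" if s: "s \<in> S" for s
  proof
    fix y assume "y \<in> psi S op s ` Orb"
    then obtain g where g: "g \<in> ?G" and y: "y = (psi S op s \<circ> g) x" unfolding Orb_def by auto
    show "y \<in> Orb" unfolding Orb_def using y pg_gen[OF s g] by (rule image_eqI)
  qed
  have compl_inv: "psi S op s ` (S - Orb) \<subseteq> S - Orb" if s: "s \<in> S" for s
  proof
    fix y assume "y \<in> psi S op s ` (S - Orb)"
    then obtain z where z: "z \<in> S" "z \<notin> Orb" and y: "y = psi S op s z" by auto
    have y_S: "y \<in> S" unfolding y using bij s z(1) by (simp add: psi_maps_into)
    have "y \<notin> Orb"
    proof
      assume "y \<in> Orb"
      then obtain g where g: "g \<in> ?G" and y_g: "y = g x" unfolding Orb_def by auto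
      have "(psi_inv S op s \<circ> g) x = z" using psi_inv_psi[of op s S z] bij s z(1) y y_g by simp
      then have "z \<in> Orb" unfolding Orb_def using pg_inv[OF s g] by (rule image_eqI[OF sym])
      then show False using z by blast
    qed
    then show "y \<in> S - Orb" using y_S by blast
  qed
  have "S - Orb = {}"
  proof (rule ccontr)
    assume "S - Orb \<noteq> {}"
    then have "decomposable S op" unfolding decomposable_def
      using x_in_Orb Orb_sub Orb_inv compl_inv by (intro exI[of _ Orb] exI[of _ "S - Orb"]) auto
    then show False using indec unfolding indecomposable_def by blast
  qed
  then show ?thesis using Orb_sub unfolding Orb_def by blast
qed

theorem mainTheorem8:
  fixes S :: "'a set" and op :: "'a \<Rightarrow> 'a \<Rightarrow> 'a" and n :: nat
  assumes "cycle_set S op"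
    and "finite S" and "S \<noteq> {}" and "card S = n"
    and "indecomposable S op"
    and "\<forall>g\<in>perm_group S op. \<forall>h\<in>perm_group S op. g \<circ> h = h \<circ> g"
  shows "n = card (perm_group S op)"
proof -
  have bij: "\<forall>s\<in>S. bij_betw (op s) S S" using assms(1) unfolding cycle_set_def by blast
  obtain x where x: "x \<in> S" using assms(3) by blast
  have orbit: "(\<lambda>g. g x) ` perm_group S op = S"
    using perm_group_orbit_eq_if_indecomposable[OF bij assms(5) x] .
  have "inj_on (\<lambda>g. g x) (perm_group S op)"
  proof (rule inj_on_eval_if_commuting_transitive[OF assms(6)])
    show "\<forall>y\<in>S. \<exists>k\<in>perm_group S op. y = k x" using orbit by auto
    show "\<forall>g\<in>perm_group S op. \<forall>y. y \<notin> S \<longrightarrow> g y = y"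
      using perm_group_stable[OF bij] by blast
  qed
  then have "card (perm_group S op) = card S" using card_image orbit by fastforce
  then show ?thesis using assms(4) by simp
qed

end
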